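(* Let $\mathbb{E}$ be a finitely complete category, $\Sigma$ a fibrational class of split epimorphisms, and suppose $\mathbb{E}$ is a $\Sigma$-Mal'tsev category. Let $R$ be a reflexive relation and $S$ a $\Sigma$-relation on an object $X$ with $[R,S]=0$, and let $p\colon R\times_XS\to X$ be a connector. Write, for generalized elements $x,y,z\colon T\to X$ with $xRy$ and $ySz$, $p(xRySz)$ for the corresponding composite $T\to X$. Then: (1) (coherence) for all such $x,y,z$ one has $x\,S\,p(xRySz)$ and $p(xRySz)\,R\,z$; (2) (left associativity) for all $x,y,z,t$ with $xRySzSt$, one has $p(p(xRySz)RzSt)=p(xRySt)$; (3) (right associativity) if moreover $R$ is a preorder, then for all $x,y,z,t$ with $xRyRzSt$, one has $p(xRySp(yRzSt))=p(xRzSt)$.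
   Context: A split epimorphism is a pair $(f,s)$ with $fs=1$. A class $\Sigma$ of split epimorphisms is fibrational if it contains all split epimorphisms $(f,s)$ with $f$ invertible and is stable under pullback along any morphism. A pair of morphisms with common codomain $Z$ is jointly extremally epic if it factors jointly through no non-invertible monomorphism into $Z$. $\mathbb{E}$ is $\Sigma$-Mal'tsev if for every split epimorphism $(f,s)\colon X\rightleftarrows Y$ in $\Sigma$ and every split epimorphism $(g,t)$ with $g\colon Y'\to Y$, letting $X'=Y'\times_YX$, $s'=(1_{Y'},sg)$, $\bar t=(tf,1_X)$, the pair $(s',\bar t)$ is jointly extremally epic. A $\Sigma$-relation is a reflexive relation $(d_0,d_1)\colon S\rightarrowtail X\times X$ with reflexivity $s_0$ such that $(d_0,s_0)\in\Sigma$ (such $S$ is automatically transitive in a $\Sigma$-Mal'tsev category). For reflexive relations $R,S$ on $X$, $R\times_XS$ is the pullback of $d_0^S$ along $d_1^R$ (elements $xRySz$), $\sigma_0^R\colon R\to R\times_XS$, $xRy\mapsto xRySy$, and $\sigma_0^S\colon S\to R\times_XS$, $ySz\mapsto yRySz$. $[R,S]=0$ means there is a morphism $p\colon R\times_XS\to X$ (a connector) with $p\sigma_0^R=d_0^R$ and $p\sigma_0^S=d_1^S$, i.e. $p(xRySy)=x$, $p(yRySz)=z$. A preorder is a reflexive transitive relation. *)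

theory Defs
  imports Main
begin

text \<open>An abstract category: objects of type 'o, arrows of type 'a.
  cmp C g f is the composite g after f.\<close>

record ('o, 'a) cat =
  Obj :: "'o set"
  Arr :: "'a set"
  Dom :: "'a \<Rightarrow> 'o"
  Cod :: "'a \<Rightarrow> 'o"
  cmp :: "'a \<Rightarrow> 'a \<Rightarrow> 'a"
  ident :: "'o \<Rightarrow> 'a"

definition hom :: "('o, 'a, 'e) cat_scheme \<Rightarrow> 'o \<Rightarrow> 'o \<Rightarrow> 'a set" where
  "hom C X Y = {f \<in> Arr C. Dom C f = X \<and> Cod C f = Y}"

definition category :: "('o, 'a, 'e) cat_scheme \<Rightarrow> bool" where
  "category C \<longleftrightarrow>
     (\<forall>f\<in>Arr C. Dom C f \<in> Obj C \<and> Cod C f \<in> Obj C) \<and>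
     (\<forall>X\<in>Obj C. ident C X \<in> hom C X X) \<and>
     (\<forall>f\<in>Arr C. \<forall>g\<in>Arr C. Cod C f = Dom C g \<longrightarrow> cmp C g f \<in> hom C (Dom C f) (Cod C g)) \<and>
     (\<forall>f\<in>Arr C. cmp C f (ident C (Dom C f)) = f \<and> cmp C (ident C (Cod C f)) f = f) \<and>
     (\<forall>f\<in>Arr C. \<forall>g\<in>Arr C. \<forall>h\<in>Arr C. Cod C f = Dom C g \<longrightarrow> Cod C g = Dom C h \<longrightarrow>
        cmp C h (cmp C g f) = cmp C (cmp C h g) f)"

definition mono :: "('o, 'a, 'e) cat_scheme \<Rightarrow> 'a \<Rightarrow> bool" where
  "mono C m \<longleftrightarrow> m \<in> Arr C \<and>
     (\<forall>u\<in>Arr C. \<forall>v\<in>Arr C. Cod C u = Dom C m \<longrightarrow> Cod C v = Dom C m \<longrightarrow> Dom C u = Dom C v \<longrightarrow>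
        cmp C m u = cmp C m v \<longrightarrow> u = v)"

definition iso :: "('o, 'a, 'e) cat_scheme \<Rightarrow> 'a \<Rightarrow> bool" where
  "iso C f \<longleftrightarrow> f \<in> Arr C \<and> (\<exists>g \<in> hom C (Cod C f) (Dom C f).
     cmp C g f = ident C (Dom C f) \<and> cmp C f g = ident C (Cod C f))"

definition is_pullback :: "('o, 'a, 'e) cat_scheme \<Rightarrow> 'a \<Rightarrow> 'a \<Rightarrow> 'o \<Rightarrow> 'a \<Rightarrow> 'a \<Rightarrow> bool" where
  "is_pullback C f g P p1 p2 \<longleftrightarrow>
     f \<in> Arr C \<and> g \<in> Arr C \<and> Cod C f = Cod C g \<and>
     p1 \<in> hom C P (Dom C f) \<and> p2 \<in> hom C P (Dom C g) \<and>
     cmp C f p1 = cmp C g p2 \<and>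
     (\<forall>T\<in>Obj C. \<forall>q1\<in>hom C T (Dom C f). \<forall>q2\<in>hom C T (Dom C g).
        cmp C f q1 = cmp C g q2 \<longrightarrow>
        (\<exists>!u. u \<in> hom C T P \<and> cmp C p1 u = q1 \<and> cmp C p2 u = q2))"

definition terminal :: "('o, 'a, 'e) cat_scheme \<Rightarrow> 'o \<Rightarrow> bool" where
  "terminal C I \<longleftrightarrow> I \<in> Obj C \<and> (\<forall>X\<in>Obj C. \<exists>!u. u \<in> hom C X I)"

definition finitely_complete :: "('o, 'a, 'e) cat_scheme \<Rightarrow> bool" where
  "finitely_complete C \<longleftrightarrow> (\<exists>I. terminal C I) \<and>
     (\<forall>f\<in>Arr C. \<forall>g\<in>Arr C. Cod C f = Cod C g \<longrightarrow> (\<exists>P p1 p2. is_pullback C f g P p1 p2))"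

definition split_epi :: "('o, 'a, 'e) cat_scheme \<Rightarrow> 'a \<Rightarrow> 'a \<Rightarrow> bool" where
  "split_epi C f s \<longleftrightarrow> f \<in> Arr C \<and> s \<in> hom C (Cod C f) (Dom C f) \<and>
     cmp C f s = ident C (Cod C f)"

definition fibrational :: "('o, 'a, 'e) cat_scheme \<Rightarrow> ('a \<times> 'a) set \<Rightarrow> bool" where
  "fibrational C \<Sigma> \<longleftrightarrow>
     (\<forall>(f, s)\<in>\<Sigma>. split_epi C f s) \<and>
     (\<forall>f s. split_epi C f s \<and> iso C f \<longrightarrow> (f, s) \<in> \<Sigma>) \<and>
     (\<forall>(f, s)\<in>\<Sigma>. \<forall>g\<in>Arr C. \<forall>P f' g' s'.
        Cod C g = Cod C f \<longrightarrow> is_pullback C g f P f' g' \<longrightarrow>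
        s' \<in> hom C (Dom C g) P \<longrightarrow> cmp C f' s' = ident C (Dom C g) \<longrightarrow>
        cmp C g' s' = cmp C s g \<longrightarrow> (f', s') \<in> \<Sigma>)"

definition jointly_extremally_epic :: "('o, 'a, 'e) cat_scheme \<Rightarrow> 'a \<Rightarrow> 'a \<Rightarrow> bool" where
  "jointly_extremally_epic C a b \<longleftrightarrow> a \<in> Arr C \<and> b \<in> Arr C \<and> Cod C a = Cod C b \<and>
     (\<forall>m a' b'. mono C m \<longrightarrow> Cod C m = Cod C a \<longrightarrow>
        a' \<in> hom C (Dom C a) (Dom C m) \<longrightarrow> b' \<in> hom C (Dom C b) (Dom C m) \<longrightarrow>
        cmp C m a' = a \<longrightarrow> cmp C m b' = b \<longrightarrow> iso C m)"

definition sigma_maltsev :: "('o, 'a, 'e) cat_scheme \<Rightarrow> ('a \<times> 'a) set \<Rightarrow> bool" where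
  "sigma_maltsev C \<Sigma> \<longleftrightarrow>
     (\<forall>(f, s)\<in>\<Sigma>. \<forall>g t P f' g' s' tb.
        split_epi C g t \<longrightarrow> Cod C g = Cod C f \<longrightarrow> is_pullback C g f P f' g' \<longrightarrow>
        s' \<in> hom C (Dom C g) P \<longrightarrow> cmp C f' s' = ident C (Dom C g) \<longrightarrow> cmp C g' s' = cmp C s g \<longrightarrow>
        tb \<in> hom C (Dom C f) P \<longrightarrow> cmp C f' tb = cmp C t f \<longrightarrow> cmp C g' tb = ident C (Dom C f) \<longrightarrow>
        jointly_extremally_epic C s' tb)"

text \<open>A reflexive relation (d0,d1) : R \<rightarrowtail> X \<times> X with reflexivity r0; the relation
  being a monomorphism into X \<times> X is expressed as (d0,d1) being jointly monic.\<close>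
definition reflexive_relation ::
  "('o, 'a, 'e) cat_scheme \<Rightarrow> 'o \<Rightarrow> 'o \<Rightarrow> 'a \<Rightarrow> 'a \<Rightarrow> 'a \<Rightarrow> bool" where
  "reflexive_relation C X R d0 d1 r0 \<longleftrightarrow>
     X \<in> Obj C \<and> R \<in> Obj C \<and> d0 \<in> hom C R X \<and> d1 \<in> hom C R X \<and> r0 \<in> hom C X R \<and>
     cmp C d0 r0 = ident C X \<and> cmp C d1 r0 = ident C X \<and>
     (\<forall>T\<in>Obj C. \<forall>u\<in>hom C T R. \<forall>v\<in>hom C T R.
        cmp C d0 u = cmp C d0 v \<longrightarrow> cmp C d1 u = cmp C d1 v \<longrightarrow> u = v)"

definition sigma_relation ::
  "('o, 'a, 'e) cat_scheme \<Rightarrow> ('a \<times> 'a) set \<Rightarrow> 'o \<Rightarrow> 'o \<Rightarrow> 'a \<Rightarrow> 'a \<Rightarrow> 'a \<Rightarrow> bool" where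
  "sigma_relation C \<Sigma> X S d0 d1 s0 \<longleftrightarrow> reflexive_relation C X S d0 d1 s0 \<and> (d0, s0) \<in> \<Sigma>"

definition witnesses ::
  "('o, 'a, 'e) cat_scheme \<Rightarrow> 'o \<Rightarrow> 'a \<Rightarrow> 'a \<Rightarrow> 'o \<Rightarrow> 'a \<Rightarrow> 'a \<Rightarrow> 'a \<Rightarrow> bool" where
  "witnesses C R d0 d1 T x y r \<longleftrightarrow> r \<in> hom C T R \<and> cmp C d0 r = x \<and> cmp C d1 r = y"

definition relates ::
  "('o, 'a, 'e) cat_scheme \<Rightarrow> 'o \<Rightarrow> 'a \<Rightarrow> 'a \<Rightarrow> 'o \<Rightarrow> 'a \<Rightarrow> 'a \<Rightarrow> bool" where
  "relates C R d0 d1 T x y \<longleftrightarrow> (\<exists>r. witnesses C R d0 d1 T x y r)"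

definition preorder_rel ::
  "('o, 'a, 'e) cat_scheme \<Rightarrow> 'o \<Rightarrow> 'o \<Rightarrow> 'a \<Rightarrow> 'a \<Rightarrow> 'a \<Rightarrow> bool" where
  "preorder_rel C X R d0 d1 r0 \<longleftrightarrow> reflexive_relation C X R d0 d1 r0 \<and>
     (\<forall>T\<in>Obj C. \<forall>x\<in>hom C T X. \<forall>y\<in>hom C T X. \<forall>z\<in>hom C T X.
        relates C R d0 d1 T x y \<longrightarrow> relates C R d0 d1 T y z \<longrightarrow> relates C R d0 d1 T x z)"

definition is_connector ::
  "('o, 'a, 'e) cat_scheme \<Rightarrow> 'o \<Rightarrow> 'o \<Rightarrow> 'a \<Rightarrow> 'a \<Rightarrow> 'a \<Rightarrow> 'o \<Rightarrow> 'a \<Rightarrow> 'a \<Rightarrow> 'a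
     \<Rightarrow> 'o \<Rightarrow> 'a \<Rightarrow> 'a \<Rightarrow> 'a \<Rightarrow> bool" where
  "is_connector C X R d0R d1R r0 S d0S d1S s0 P pr1 pr2 p \<longleftrightarrow>
     is_pullback C d1R d0S P pr1 pr2 \<and> p \<in> hom C P X \<and>
     (\<forall>\<sigma>. \<sigma> \<in> hom C R P \<longrightarrow> cmp C pr1 \<sigma> = ident C R \<longrightarrow> cmp C pr2 \<sigma> = cmp C s0 d1R \<longrightarrow>
        cmp C p \<sigma> = d0R) \<and>
     (\<forall>\<sigma>. \<sigma> \<in> hom C S P \<longrightarrow> cmp C pr1 \<sigma> = cmp C r0 d0S \<longrightarrow> cmp C pr2 \<sigma> = ident C S \<longrightarrow>
        cmp C p \<sigma> = d1S)"

text \<open>p(xRySz) for r : T \<rightarrow> R, s : T \<rightarrow> S witnessing xRy and ySz.\<close>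
definition conn_app ::
  "('o, 'a, 'e) cat_scheme \<Rightarrow> 'o \<Rightarrow> 'a \<Rightarrow> 'a \<Rightarrow> 'a \<Rightarrow> 'o \<Rightarrow> 'a \<Rightarrow> 'a \<Rightarrow> 'a" where
  "conn_app C P pr1 pr2 p T r s =
     cmp C p (THE u. u \<in> hom C T P \<and> cmp C pr1 u = r \<and> cmp C pr2 u = s)"

end

theory Submission
  imports Defs
begin

text \<open>
  Everything rests on one consequence of the \<open>\<Sigma>\<close>-Mal'tsev condition: for a pullback of a split
  epimorphism in \<open>\<Sigma>\<close> along a split epimorphism, the two canonical sections are jointly
  extremally epic, so two maps agreeing on both sections are equal, and a pair of maps into X that
  factors through a relation on both sections factors through it.
  For \<open>R \<times>\<^sub>X S\<close> with the sections \<open>\<sigma>\<^sub>0\<^sup>R\<close>, \<open>\<sigma>\<^sub>0\<^sup>S\<close> this gives coherence. The objects of quadruples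
  \<open>xRySzSt\<close> and \<open>xRyRzSt\<close> are again such pullbacks, and on their sections both sides of each
  associativity law reduce to the connector identities \<open>p(xRySy) = x\<close> and \<open>p(yRySz) = z\<close>;
  transitivity of S, respectively of the preorder R, provides the composite witnesses.
\<close>

locale category_context =
  fixes C :: "('o, 'a, 'e) cat_scheme"
  assumes category: "category C"
begin

abbreviation comp (infixr "\<cdot>" 55) where "g \<cdot> f \<equiv> cmp C g f"

lemma in_hom_iff: "f \<in> hom C A B \<longleftrightarrow> f \<in> Arr C \<and> Dom C f = A \<and> Cod C f = B"
  by (simp add: hom_def)

lemma Dom_in_Obj [simp]: "f \<in> Arr C \<Longrightarrow> Dom C f \<in> Obj C"
  and Cod_in_Obj [simp]: "f \<in> Arr C \<Longrightarrow> Cod C f \<in> Obj C"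
  using category unfolding category_def by blast+

lemma ident_in_Arr [simp]: "A \<in> Obj C \<Longrightarrow> ident C A \<in> Arr C"
  and Dom_ident [simp]: "A \<in> Obj C \<Longrightarrow> Dom C (ident C A) = A"
  and Cod_ident [simp]: "A \<in> Obj C \<Longrightarrow> Cod C (ident C A) = A"
  using category unfolding category_def hom_def by blast+

lemma comp_in_Arr [simp]: "f \<in> Arr C \<Longrightarrow> g \<in> Arr C \<Longrightarrow> Cod C f = Dom C g \<Longrightarrow> g \<cdot> f \<in> Arr C"
  and Dom_comp [simp]: "f \<in> Arr C \<Longrightarrow> g \<in> Arr C \<Longrightarrow> Cod C f = Dom C g \<Longrightarrow> Dom C (g \<cdot> f) = Dom C f"
  and Cod_comp [simp]: "f \<in> Arr C \<Longrightarrow> g \<in> Arr C \<Longrightarrow> Cod C f = Dom C g \<Longrightarrow> Cod C (g \<cdot> f) = Cod C g"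
  using category unfolding category_def hom_def by blast+

lemma comp_ident_left [simp]: "f \<in> Arr C \<Longrightarrow> Cod C f = B \<Longrightarrow> ident C B \<cdot> f = f"
  and comp_ident_right [simp]: "f \<in> Arr C \<Longrightarrow> Dom C f = A \<Longrightarrow> f \<cdot> ident C A = f"
  using category unfolding category_def by blast+

lemma comp_assoc [simp]:
  assumes "f \<in> Arr C" "g \<in> Arr C" "h \<in> Arr C" "Cod C f = Dom C g" "Cod C g = Dom C h"
  shows "(h \<cdot> g) \<cdot> f = h \<cdot> (g \<cdot> f)"
proof -
  have "h \<cdot> (g \<cdot> f) = (h \<cdot> g) \<cdot> f" using category assms unfolding category_def by blast
  then show ?thesis by simp
qed

lemma comp_assoc_subst:
  "g \<cdot> f = h \<Longrightarrow> x \<in> Arr C \<Longrightarrow> f \<in> Arr C \<Longrightarrow> g \<in> Arr C \<Longrightarrow> Cod C x = Dom C f \<Longrightarrow> Cod C f = Dom C g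
   \<Longrightarrow> g \<cdot> (f \<cdot> x) = h \<cdot> x"
  by (metis comp_assoc)

lemma in_hom_ObjD: "f \<in> hom C A B \<Longrightarrow> A \<in> Obj C" "f \<in> hom C A B \<Longrightarrow> B \<in> Obj C"
  by (metis Dom_in_Obj in_hom_iff) (metis Cod_in_Obj in_hom_iff)

lemma comp_in_hom: "f \<in> hom C A B \<Longrightarrow> g \<in> hom C B D \<Longrightarrow> g \<cdot> f \<in> hom C A D"
  by (simp add: in_hom_iff)

lemma pullbackD:
  assumes "is_pullback C f g P p1 p2"
  shows "f \<in> Arr C" "g \<in> Arr C" "Cod C f = Cod C g" "p1 \<in> Arr C" "p2 \<in> Arr C"
    "Dom C p1 = P" "Dom C p2 = P" "Cod C p1 = Dom C f" "Cod C p2 = Dom C g" "P \<in> Obj C"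
    "f \<cdot> p1 = g \<cdot> p2"
  using assms unfolding is_pullback_def hom_def by (auto dest: Dom_in_Obj)

lemma pullback_lift:
  assumes "is_pullback C f g P p1 p2"
    and "q1 \<in> hom C T (Dom C f)" "q2 \<in> hom C T (Dom C g)" "f \<cdot> q1 = g \<cdot> q2"
  shows "\<exists>u. u \<in> hom C T P \<and> p1 \<cdot> u = q1 \<and> p2 \<cdot> u = q2"
proof -
  have "T \<in> Obj C" using assms(2) by (rule in_hom_ObjD)
  then show ?thesis using assms unfolding is_pullback_def by blast
qed

lemma pullback_unique:
  assumes pb: "is_pullback C f g P p1 p2" and u: "u \<in> hom C T P" and v: "v \<in> hom C T P"
    and "p1 \<cdot> u = p1 \<cdot> v" "p2 \<cdot> u = p2 \<cdot> v"
  shows "u = v"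
proof -
  note pb' = pullbackD[OF pb]
  have T: "T \<in> Obj C" using u by (rule in_hom_ObjD)
  have q: "p1 \<cdot> u \<in> hom C T (Dom C f)" "p2 \<cdot> u \<in> hom C T (Dom C g)"
    using u pb' by (simp_all add: in_hom_iff)
  have "f \<cdot> (p1 \<cdot> u) = g \<cdot> (p2 \<cdot> u)"
    using u pb' comp_assoc[of u p1 f] comp_assoc[of u p2 g] by (simp add: in_hom_iff)
  then have "\<exists>!w. w \<in> hom C T P \<and> p1 \<cdot> w = p1 \<cdot> u \<and> p2 \<cdot> w = p2 \<cdot> u"
    using pb T q unfolding is_pullback_def by blast
  then obtain w where "\<And>y. y \<in> hom C T P \<and> p1 \<cdot> y = p1 \<cdot> u \<and> p2 \<cdot> y = p2 \<cdot> u \<Longrightarrow> y = w"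
    by blast
  then show ?thesis using u v assms(4,5) by (metis (no_types))
qed

lemma conn_app_eq:
  assumes pb: "is_pullback C f g P pr1 pr2"
    and u: "u \<in> hom C T P" "pr1 \<cdot> u = r" "pr2 \<cdot> u = s"
  shows "conn_app C P pr1 pr2 p T r s = p \<cdot> u"
proof -
  have "(THE v. v \<in> hom C T P \<and> pr1 \<cdot> v = r \<and> pr2 \<cdot> v = s) = u"
  proof (rule the_equality)
    fix v assume v: "v \<in> hom C T P \<and> pr1 \<cdot> v = r \<and> pr2 \<cdot> v = s"
    show "v = u" by (rule pullback_unique[OF pb]) (use v u in simp_all)
  qed (use u in simp)
  then show ?thesis by (simp add: conn_app_def)
qed

lemma terminal_unique:
  assumes "terminal C I" "u \<in> hom C T I" "v \<in> hom C T I"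
  shows "u = v"
  using assms in_hom_ObjD(1)[OF assms(2)] unfolding terminal_def by blast

lemma binary_product:
  assumes "finitely_complete C" "X \<in> Obj C"
  obtains X2 \<pi>1 \<pi>2 where "\<pi>1 \<in> hom C X2 X" "\<pi>2 \<in> hom C X2 X"
    "\<And>T q1 q2. q1 \<in> hom C T X \<Longrightarrow> q2 \<in> hom C T X \<Longrightarrow>
       \<exists>m. m \<in> hom C T X2 \<and> \<pi>1 \<cdot> m = q1 \<and> \<pi>2 \<cdot> m = q2"
    "\<And>T u v. u \<in> hom C T X2 \<Longrightarrow> v \<in> hom C T X2 \<Longrightarrow> \<pi>1 \<cdot> u = \<pi>1 \<cdot> v \<Longrightarrow> \<pi>2 \<cdot> u = \<pi>2 \<cdot> v
       \<Longrightarrow> u = v"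
proof -
  obtain I where I: "terminal C I" using assms(1) unfolding finitely_complete_def by blast
  then obtain e where e: "e \<in> hom C X I" using assms(2) unfolding terminal_def by blast
  then obtain X2 \<pi>1 \<pi>2 where pb: "is_pullback C e e X2 \<pi>1 \<pi>2"
    using assms(1) unfolding finitely_complete_def in_hom_iff by blast
  have pair: "\<exists>m. m \<in> hom C T X2 \<and> \<pi>1 \<cdot> m = q1 \<and> \<pi>2 \<cdot> m = q2"
    if q: "q1 \<in> hom C T X" "q2 \<in> hom C T X" for T q1 q2
  proof -
    have "e \<cdot> q1 = e \<cdot> q2"
      using terminal_unique[OF I] comp_in_hom[OF q(1) e] comp_in_hom[OF q(2) e] by blast
    moreover have "Dom C e = X" using e by (simp add: in_hom_iff)
    ultimately show ?thesis using pullback_lift[OF pb] q by simp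
  qed
  have \<pi>: "\<pi>1 \<in> hom C X2 X" "\<pi>2 \<in> hom C X2 X"
    using pullbackD[OF pb] e by (simp_all add: in_hom_iff)
  show thesis by (rule that[OF \<pi>]) (fact pair, rule pullback_unique[OF pb])
qed

lemma pullback_exists:
  assumes "finitely_complete C" "f \<in> Arr C" "g \<in> Arr C" "Cod C f = Cod C g"
  obtains P p1 p2 where "is_pullback C f g P p1 p2"
  using assms unfolding finitely_complete_def by blast

lemma mono_pullback:
  assumes pb: "is_pullback C n m M a e" and m: "mono C m"
  shows "mono C a"
  unfolding mono_def
proof (intro conjI ballI impI)
  note pb' = pullbackD[OF pb]
  show "a \<in> Arr C" by (fact pb'(4))
  fix u v assume uv: "u \<in> Arr C" "v \<in> Arr C" "Cod C u = Dom C a" "Cod C v = Dom C a"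
    "Dom C u = Dom C v" "a \<cdot> u = a \<cdot> v"
  have square: "m \<cdot> (e \<cdot> x) = n \<cdot> (a \<cdot> x)" if "x \<in> Arr C" "Cod C x = M" for x
    using comp_assoc_subst[OF pb'(11), of x] comp_assoc[of x e m] that pb' by simp
  have "e \<cdot> u = e \<cdot> v"
  proof -
    have "\<forall>u\<in>Arr C. \<forall>v\<in>Arr C. Cod C u = Dom C m \<longrightarrow> Cod C v = Dom C m \<longrightarrow> Dom C u = Dom C v \<longrightarrow>
        m \<cdot> u = m \<cdot> v \<longrightarrow> u = v"
      using m unfolding mono_def by blast
    moreover have "m \<cdot> (e \<cdot> u) = m \<cdot> (e \<cdot> v)" using square[of u] square[of v] uv pb' by simp
    ultimately show ?thesis using uv pb' by simp
  qed
  then show "u = v"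
    using pullback_unique[OF pb, of u "Dom C u" v] uv pb' by (simp add: in_hom_iff)
qed

lemma jointly_extremally_epicD:
  assumes "jointly_extremally_epic C e1 e2" "mono C m" "Cod C m = Cod C e1"
    and "h1 \<in> hom C (Dom C e1) (Dom C m)" "h2 \<in> hom C (Dom C e2) (Dom C m)"
    and "m \<cdot> h1 = e1" "m \<cdot> h2 = e2"
  shows "iso C m"
  using assms unfolding jointly_extremally_epic_def by blast

text \<open>Pulling m back along n gives a monomorphism through which e1 and e2 factor, hence an iso.\<close>

lemma jointly_extremally_epic_factor_mono:
  assumes fc: "finitely_complete C"
    and jee: "jointly_extremally_epic C e1 e2" and A: "Cod C e1 = A"
    and m: "mono C m" "m \<in> hom C E Y" and n: "n \<in> hom C A Y"
    and w1: "w1 \<in> hom C (Dom C e1) E" "n \<cdot> e1 = m \<cdot> w1"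
    and w2: "w2 \<in> hom C (Dom C e2) E" "n \<cdot> e2 = m \<cdot> w2"
  obtains w where "w \<in> hom C A E" "m \<cdot> w = n"
proof -
  note arr = m(2)[unfolded in_hom_iff] n[unfolded in_hom_iff]
  have e: "e1 \<in> Arr C" "e2 \<in> Arr C" "Cod C e2 = A"
    using jee A unfolding jointly_extremally_epic_def by auto
  obtain M mA mE where pb: "is_pullback C n m M mA mE"
    by (rule pullback_exists[OF fc, of n m]) (use arr in simp_all)
  note pb' = pullbackD[OF pb]
  have "\<exists>h. h \<in> hom C (Dom C e1) M \<and> mA \<cdot> h = e1" "\<exists>h. h \<in> hom C (Dom C e2) M \<and> mA \<cdot> h = e2"
    using pullback_lift[OF pb, of e1 "Dom C e1" w1] pullback_lift[OF pb, of e2 "Dom C e2" w2]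
      w1 w2 e A arr by (auto simp: in_hom_iff)
  then obtain h1 h2 where "h1 \<in> hom C (Dom C e1) M" "mA \<cdot> h1 = e1"
    and "h2 \<in> hom C (Dom C e2) M" "mA \<cdot> h2 = e2"
    by blast
  then have "iso C mA"
    using jointly_extremally_epicD[OF jee mono_pullback[OF pb m(1)]] pb' arr A by simp
  then obtain j where j: "j \<in> hom C A M" "mA \<cdot> j = ident C A"
    using pb' arr unfolding iso_def by auto
  note j' = j(1)[unfolded in_hom_iff]
  have "m \<cdot> (mE \<cdot> j) = n \<cdot> (mA \<cdot> j)"
    using comp_assoc_subst[OF pb'(11)[symmetric], of j] j' pb'(1-10) arr by simp
  then have "m \<cdot> (mE \<cdot> j) = n" using j(2) arr by simp
  then show thesis using that[of "mE \<cdot> j"] j' pb' arr by (simp add: in_hom_iff)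
qed

lemma jointly_extremally_epic_factor:
  assumes fc: "finitely_complete C"
    and jee: "jointly_extremally_epic C e1 e2" and A: "Cod C e1 = A"
    and u: "u0 \<in> hom C E X" "u1 \<in> hom C E X"
    and jm: "\<And>T v w. v \<in> hom C T E \<Longrightarrow> w \<in> hom C T E \<Longrightarrow> u0 \<cdot> v = u0 \<cdot> w \<Longrightarrow> u1 \<cdot> v = u1 \<cdot> w
      \<Longrightarrow> v = w"
    and ab: "a \<in> hom C A X" "b \<in> hom C A X"
    and w1: "w1 \<in> hom C (Dom C e1) E" "u0 \<cdot> w1 = a \<cdot> e1" "u1 \<cdot> w1 = b \<cdot> e1"
    and w2: "w2 \<in> hom C (Dom C e2) E" "u0 \<cdot> w2 = a \<cdot> e2" "u1 \<cdot> w2 = b \<cdot> e2"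
  obtains w where "w \<in> hom C A E" "u0 \<cdot> w = a" "u1 \<cdot> w = b"
proof -
  obtain X2 \<pi>1 \<pi>2 where \<pi>: "\<pi>1 \<in> hom C X2 X" "\<pi>2 \<in> hom C X2 X"
    and pair: "\<And>T q1 q2. q1 \<in> hom C T X \<Longrightarrow> q2 \<in> hom C T X \<Longrightarrow>
       \<exists>m. m \<in> hom C T X2 \<and> \<pi>1 \<cdot> m = q1 \<and> \<pi>2 \<cdot> m = q2"
    and pair_unique: "\<And>T v w. v \<in> hom C T X2 \<Longrightarrow> w \<in> hom C T X2 \<Longrightarrow> \<pi>1 \<cdot> v = \<pi>1 \<cdot> w
       \<Longrightarrow> \<pi>2 \<cdot> v = \<pi>2 \<cdot> w \<Longrightarrow> v = w"
    using binary_product[OF fc in_hom_ObjD(2)[OF ab(1)]] by metis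
  obtain m0 where m0: "m0 \<in> hom C E X2" "\<pi>1 \<cdot> m0 = u0" "\<pi>2 \<cdot> m0 = u1"
    using pair[OF u] by blast
  obtain n where n: "n \<in> hom C A X2" "\<pi>1 \<cdot> n = a" "\<pi>2 \<cdot> n = b"
    using pair[OF ab] by blast
  note arr = \<pi>[unfolded in_hom_iff] m0(1)[unfolded in_hom_iff] n(1)[unfolded in_hom_iff]
    u[unfolded in_hom_iff] ab[unfolded in_hom_iff]
  note eqs_base = m0(2,3) n(2,3)
  note eqs = eqs_base eqs_base[THEN comp_assoc_subst]
  have "mono C m0"
    unfolding mono_def
  proof (intro conjI ballI impI)
    show "m0 \<in> Arr C" using arr by simp
    fix v w assume vw: "v \<in> Arr C" "w \<in> Arr C" "Cod C v = Dom C m0" "Cod C w = Dom C m0"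
      "Dom C v = Dom C w" "m0 \<cdot> v = m0 \<cdot> w"
    have "u0 \<cdot> v = u0 \<cdot> w" "u1 \<cdot> v = u1 \<cdot> w"
      using vw arr eqs comp_assoc_subst[OF m0(2), of v] comp_assoc_subst[OF m0(2), of w]
        comp_assoc_subst[OF m0(3), of v] comp_assoc_subst[OF m0(3), of w] by metis+
    then show "v = w" using jm[of v "Dom C v" w] vw arr by (simp add: in_hom_iff)
  qed
  moreover have "n \<cdot> e = m0 \<cdot> w"
    if "e \<in> Arr C" "Cod C e = A" "w \<in> hom C (Dom C e) E" "u0 \<cdot> w = a \<cdot> e" "u1 \<cdot> w = b \<cdot> e" for e w
    by (rule pair_unique[of _ "Dom C e"]) (use that arr eqs in \<open>simp_all add: in_hom_iff\<close>)
  moreover have "e1 \<in> Arr C" "e2 \<in> Arr C" "Cod C e2 = A"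
    using jee A unfolding jointly_extremally_epic_def by auto
  ultimately obtain w where w: "w \<in> hom C A E" "m0 \<cdot> w = n"
    using jointly_extremally_epic_factor_mono[OF fc jee A _ m0(1) n(1) w1(1) _ w2(1)] A w1 w2 by metis
  have "u0 \<cdot> w = \<pi>1 \<cdot> (m0 \<cdot> w)" "u1 \<cdot> w = \<pi>2 \<cdot> (m0 \<cdot> w)"
    using w(1) arr eqs by (simp_all add: in_hom_iff)
  then show thesis using that w n by simp
qed

lemma jointly_extremally_epic_cancel:
  assumes fc: "finitely_complete C"
    and jee: "jointly_extremally_epic C e1 e2" and A: "Cod C e1 = A"
    and ab: "a \<in> hom C A X" "b \<in> hom C A X"
    and eq: "a \<cdot> e1 = b \<cdot> e1" "a \<cdot> e2 = b \<cdot> e2"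
  shows "a = b"
proof -
  have e: "e1 \<in> Arr C" "e2 \<in> Arr C" "Cod C e2 = A"
    using jee A unfolding jointly_extremally_epic_def by auto
  note arr = ab[unfolded in_hom_iff]
  have X: "X \<in> Obj C" using in_hom_ObjD(2)[OF ab(1)] .
  obtain w where "w \<in> hom C A X" "ident C X \<cdot> w = a" "ident C X \<cdot> w = b"
  proof (rule jointly_extremally_epic_factor[OF fc jee A _ _ _ ab, of "ident C X" X "ident C X"])
    show "a \<cdot> e1 \<in> hom C (Dom C e1) X" "a \<cdot> e2 \<in> hom C (Dom C e2) X"
      using arr e A by (simp_all add: in_hom_iff)
  qed (use X e A arr eq in \<open>simp_all add: in_hom_iff\<close>)
  then show ?thesis by (simp add: in_hom_iff)
qed

lemma reflexive_relationD:
  assumes "reflexive_relation C X R d0 d1 r0"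
  shows "X \<in> Obj C" "R \<in> Obj C"
    "d0 \<in> Arr C" "Dom C d0 = R" "Cod C d0 = X" "d1 \<in> Arr C" "Dom C d1 = R" "Cod C d1 = X"
    "r0 \<in> Arr C" "Dom C r0 = X" "Cod C r0 = R" "d0 \<cdot> r0 = ident C X" "d1 \<cdot> r0 = ident C X"
  using assms unfolding reflexive_relation_def in_hom_iff by auto

lemma reflexive_relation_jointly_monic:
  assumes "reflexive_relation C X R d0 d1 r0" "u \<in> hom C T R" "v \<in> hom C T R"
    and "d0 \<cdot> u = d0 \<cdot> v" "d1 \<cdot> u = d1 \<cdot> v"
  shows "u = v"
  using assms in_hom_ObjD(1)[OF assms(2)] unfolding reflexive_relation_def by blast

lemma preorder_rel_transitive:
  assumes pre: "preorder_rel C X R d0 d1 r0" and pb: "is_pullback C d1 d0 R2 m1 m2"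
  obtains \<mu> where "\<mu> \<in> hom C R2 R" "d0 \<cdot> \<mu> = d0 \<cdot> m1" "d1 \<cdot> \<mu> = d1 \<cdot> m2"
proof -
  have rel: "reflexive_relation C X R d0 d1 r0" using pre unfolding preorder_rel_def by blast
  note r = reflexive_relationD[OF rel] and pb' = pullbackD[OF pb]
  have "relates C R d0 d1 R2 (d0 \<cdot> m1) (d1 \<cdot> m1)" "relates C R d0 d1 R2 (d1 \<cdot> m1) (d1 \<cdot> m2)"
    unfolding relates_def witnesses_def using r pb' by (auto simp: in_hom_iff)
  moreover have "d0 \<cdot> m1 \<in> hom C R2 X" "d1 \<cdot> m1 \<in> hom C R2 X" "d1 \<cdot> m2 \<in> hom C R2 X"
    using r pb' by (simp_all add: in_hom_iff)
  ultimately have "relates C R d0 d1 R2 (d0 \<cdot> m1) (d1 \<cdot> m2)"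
    using pre pb'(10) unfolding preorder_rel_def by blast
  then show thesis using that unfolding relates_def witnesses_def by blast
qed

end

locale sigma_maltsev_category = category_context C for C :: "('o, 'a, 'e) cat_scheme" +
  fixes \<Sigma> :: "('a \<times> 'a) set"
  assumes finitely_complete: "finitely_complete C"
    and fibrational: "fibrational C \<Sigma>"
    and sigma_maltsev: "sigma_maltsev C \<Sigma>"
begin

lemma pullback_split_sections:
  assumes fs: "(f, s) \<in> \<Sigma>" and gt: "split_epi C g t"
    and homs: "f \<in> hom C E B" "g \<in> hom C A B" and pb: "is_pullback C g f Q f' g'"
  obtains s' tb where "s' \<in> hom C A Q" "f' \<cdot> s' = ident C A" "g' \<cdot> s' = s \<cdot> g"
    and "tb \<in> hom C E Q" "f' \<cdot> tb = t \<cdot> f" "g' \<cdot> tb = ident C E"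
    and "(f', s') \<in> \<Sigma>" and "jointly_extremally_epic C s' tb"
proof -
  have A: "Dom C g = A" and E: "Dom C f = E" and cod: "Cod C g = Cod C f"
    using homs by (simp_all add: in_hom_iff)
  have "split_epi C f s" using fibrational fs unfolding fibrational_def by blast
  then have f: "f \<in> Arr C" "s \<in> Arr C" "Dom C s = Cod C f" "Cod C s = Dom C f"
      "f \<cdot> s = ident C (Cod C f)"
    unfolding split_epi_def in_hom_iff by auto
  have g: "g \<in> Arr C" "t \<in> Arr C" "Dom C t = Cod C g" "Cod C t = Dom C g"
      "g \<cdot> t = ident C (Cod C g)"
    using gt unfolding split_epi_def in_hom_iff by auto
  have "\<exists>s'. s' \<in> hom C (Dom C g) Q \<and> f' \<cdot> s' = ident C (Dom C g) \<and> g' \<cdot> s' = s \<cdot> g"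
    by (rule pullback_lift[OF pb])
      (use f g cod comp_assoc_subst[OF f(5), of g] in \<open>simp_all add: in_hom_iff\<close>)
  then obtain s' where s': "s' \<in> hom C (Dom C g) Q" "f' \<cdot> s' = ident C (Dom C g)" "g' \<cdot> s' = s \<cdot> g"
    by blast
  have "\<exists>tb. tb \<in> hom C (Dom C f) Q \<and> f' \<cdot> tb = t \<cdot> f \<and> g' \<cdot> tb = ident C (Dom C f)"
    by (rule pullback_lift[OF pb])
      (use f g cod comp_assoc_subst[OF g(5), of f] in \<open>simp_all add: in_hom_iff\<close>)
  then obtain tb where tb: "tb \<in> hom C (Dom C f) Q" "f' \<cdot> tb = t \<cdot> f" "g' \<cdot> tb = ident C (Dom C f)"
    by blast
  have "\<forall>g\<in>Arr C. \<forall>P f' g' s'. Cod C g = Cod C f \<longrightarrow> is_pullback C g f P f' g' \<longrightarrow>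
      s' \<in> hom C (Dom C g) P \<longrightarrow> f' \<cdot> s' = ident C (Dom C g) \<longrightarrow> g' \<cdot> s' = s \<cdot> g \<longrightarrow> (f', s') \<in> \<Sigma>"
    using fibrational fs unfolding fibrational_def by fast
  then have "(f', s') \<in> \<Sigma>" using g cod pb s' by blast
  moreover have "\<forall>g t P f' g' s' tb. split_epi C g t \<longrightarrow> Cod C g = Cod C f \<longrightarrow>
      is_pullback C g f P f' g' \<longrightarrow>
      s' \<in> hom C (Dom C g) P \<longrightarrow> f' \<cdot> s' = ident C (Dom C g) \<longrightarrow> g' \<cdot> s' = s \<cdot> g \<longrightarrow>
      tb \<in> hom C (Dom C f) P \<longrightarrow> f' \<cdot> tb = t \<cdot> f \<longrightarrow> g' \<cdot> tb = ident C (Dom C f) \<longrightarrow>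
      jointly_extremally_epic C s' tb"
    using sigma_maltsev fs unfolding sigma_maltsev_def by fast
  then have "jointly_extremally_epic C s' tb" using gt cod pb s' tb by blast
  ultimately show thesis using that s' tb unfolding A E by blast
qed

lemma sigma_relation_transitive:
  assumes S: "sigma_relation C \<Sigma> X S d0 d1 s0" and pb: "is_pullback C d1 d0 S2 q1 q2"
  obtains \<tau> where "\<tau> \<in> hom C S2 S" "d0 \<cdot> \<tau> = d0 \<cdot> q1" "d1 \<cdot> \<tau> = d1 \<cdot> q2"
proof -
  have rel: "reflexive_relation C X S d0 d1 s0" and \<Sigma>: "(d0, s0) \<in> \<Sigma>"
    using S unfolding sigma_relation_def by blast+
  note r = reflexive_relationD[OF rel] and pb' = pullbackD[OF pb]
  have split: "split_epi C d1 s0" and hom: "d0 \<in> hom C S X" "d1 \<in> hom C S X"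
    using r by (simp_all add: split_epi_def in_hom_iff)
  obtain ss ts where ss: "ss \<in> hom C S S2" "q1 \<cdot> ss = ident C S" "q2 \<cdot> ss = s0 \<cdot> d1"
    and ts: "ts \<in> hom C S S2" "q1 \<cdot> ts = s0 \<cdot> d0" "q2 \<cdot> ts = ident C S"
    and jee: "jointly_extremally_epic C ss ts"
    using pullback_split_sections[OF \<Sigma> split hom pb] by blast
  note arr = ss(1)[unfolded in_hom_iff] ts(1)[unfolded in_hom_iff]
  show thesis
  proof (rule jointly_extremally_epic_factor[OF finitely_complete jee _ _ _
        reflexive_relation_jointly_monic[OF rel]])
    show "d0 \<cdot> ident C S = (d0 \<cdot> q1) \<cdot> ss" "d1 \<cdot> ident C S = (d1 \<cdot> q2) \<cdot> ss"
      "d0 \<cdot> ident C S = (d0 \<cdot> q1) \<cdot> ts" "d1 \<cdot> ident C S = (d1 \<cdot> q2) \<cdot> ts"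
      using r pb' arr ss ts comp_assoc_subst[OF r(12)] comp_assoc_subst[OF r(13)] by simp_all
  qed (use r pb' arr that in \<open>simp_all add: in_hom_iff\<close>)
qed

end

locale connector_context = sigma_maltsev_category C \<Sigma>
  for C :: "('o, 'a, 'e) cat_scheme" and \<Sigma> :: "('a \<times> 'a) set" +
  fixes X R d0R d1R r0 S d0S d1S s0 P pr1 pr2 p
  assumes R_relation: "reflexive_relation C X R d0R d1R r0"
    and S_relation: "sigma_relation C \<Sigma> X S d0S d1S s0"
    and connector: "is_connector C X R d0R d1R r0 S d0S d1S s0 P pr1 pr2 p"
begin

lemma S_reflexive: "reflexive_relation C X S d0S d1S s0"
  and S_in_\<Sigma>: "(d0S, s0) \<in> \<Sigma>"
  using S_relation unfolding sigma_relation_def by blast+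

lemma pullback_P: "is_pullback C d1R d0S P pr1 pr2"
  using connector unfolding is_connector_def by blast

lemma connector_arrows [simp]:
  "X \<in> Obj C" "R \<in> Obj C" "S \<in> Obj C" "P \<in> Obj C"
  "d0R \<in> Arr C" "Dom C d0R = R" "Cod C d0R = X" "d1R \<in> Arr C" "Dom C d1R = R" "Cod C d1R = X"
  "r0 \<in> Arr C" "Dom C r0 = X" "Cod C r0 = R"
  "d0S \<in> Arr C" "Dom C d0S = S" "Cod C d0S = X" "d1S \<in> Arr C" "Dom C d1S = S" "Cod C d1S = X"
  "s0 \<in> Arr C" "Dom C s0 = X" "Cod C s0 = S"
  "pr1 \<in> Arr C" "Dom C pr1 = P" "Cod C pr1 = R" "pr2 \<in> Arr C" "Dom C pr2 = P" "Cod C pr2 = S"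
  "p \<in> Arr C" "Dom C p = P" "Cod C p = X"
  using reflexive_relationD[OF R_relation] reflexive_relationD[OF S_reflexive] pullbackD[OF pullback_P]
    connector unfolding is_connector_def in_hom_iff by auto

lemma reflexivity [simp]:
  "d0R \<cdot> r0 = ident C X" "d1R \<cdot> r0 = ident C X" "d0S \<cdot> s0 = ident C X" "d1S \<cdot> s0 = ident C X"
  using reflexive_relationD[OF R_relation] reflexive_relationD[OF S_reflexive] by simp_all

lemma reflexivity_comp [simp]:
  "x \<in> Arr C \<Longrightarrow> Cod C x = X \<Longrightarrow> d0R \<cdot> (r0 \<cdot> x) = x"
  "x \<in> Arr C \<Longrightarrow> Cod C x = X \<Longrightarrow> d1R \<cdot> (r0 \<cdot> x) = x"
  "x \<in> Arr C \<Longrightarrow> Cod C x = X \<Longrightarrow> d0S \<cdot> (s0 \<cdot> x) = x"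
  "x \<in> Arr C \<Longrightarrow> Cod C x = X \<Longrightarrow> d1S \<cdot> (s0 \<cdot> x) = x"
  by (simp_all add: comp_assoc_subst[OF reflexivity(1)] comp_assoc_subst[OF reflexivity(2)]
      comp_assoc_subst[OF reflexivity(3)] comp_assoc_subst[OF reflexivity(4)])

lemma pullback_P_commutes [simp]: "d1R \<cdot> pr1 = d0S \<cdot> pr2"
  using pullbackD(11)[OF pullback_P] .

lemma pullback_P_commutes_comp [simp]:
  "x \<in> Arr C \<Longrightarrow> Cod C x = P \<Longrightarrow> d1R \<cdot> (pr1 \<cdot> x) = d0S \<cdot> (pr2 \<cdot> x)"
  by (simp add: comp_assoc_subst[OF pullback_P_commutes])

lemma R_jointly_monic:
  "u \<in> Arr C \<Longrightarrow> v \<in> Arr C \<Longrightarrow> Cod C u = R \<Longrightarrow> Cod C v = R \<Longrightarrow> Dom C u = Dom C v \<Longrightarrow>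
   d0R \<cdot> u = d0R \<cdot> v \<Longrightarrow> d1R \<cdot> u = d1R \<cdot> v \<Longrightarrow> u = v"
  using reflexive_relation_jointly_monic[OF R_relation, of u "Dom C u" v] by (simp add: in_hom_iff)

lemma S_jointly_monic:
  "u \<in> Arr C \<Longrightarrow> v \<in> Arr C \<Longrightarrow> Cod C u = S \<Longrightarrow> Cod C v = S \<Longrightarrow> Dom C u = Dom C v \<Longrightarrow>
   d0S \<cdot> u = d0S \<cdot> v \<Longrightarrow> d1S \<cdot> u = d1S \<cdot> v \<Longrightarrow> u = v"
  using reflexive_relation_jointly_monic[OF S_reflexive, of u "Dom C u" v] by (simp add: in_hom_iff)

lemma P_jointly_monic:
  "u \<in> Arr C \<Longrightarrow> v \<in> Arr C \<Longrightarrow> Cod C u = P \<Longrightarrow> Cod C v = P \<Longrightarrow> Dom C u = Dom C v \<Longrightarrow>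
   pr1 \<cdot> u = pr1 \<cdot> v \<Longrightarrow> pr2 \<cdot> u = pr2 \<cdot> v \<Longrightarrow> u = v"
  using pullback_unique[OF pullback_P, of u "Dom C u" v] by (simp add: in_hom_iff)

lemma connector_sections:
  obtains \<sigma>R \<sigma>S where
    "\<sigma>R \<in> hom C R P" "pr1 \<cdot> \<sigma>R = ident C R" "pr2 \<cdot> \<sigma>R = s0 \<cdot> d1R" "p \<cdot> \<sigma>R = d0R"
    "\<sigma>S \<in> hom C S P" "pr1 \<cdot> \<sigma>S = r0 \<cdot> d0S" "pr2 \<cdot> \<sigma>S = ident C S" "p \<cdot> \<sigma>S = d1S"
    "(pr1, \<sigma>R) \<in> \<Sigma>" "jointly_extremally_epic C \<sigma>R \<sigma>S"
proof -
  have split: "split_epi C d1R r0" and hom: "d0S \<in> hom C S X" "d1R \<in> hom C R X"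
    by (simp_all add: split_epi_def in_hom_iff)
  obtain \<sigma>R \<sigma>S where \<sigma>:
    "\<sigma>R \<in> hom C R P" "pr1 \<cdot> \<sigma>R = ident C R" "pr2 \<cdot> \<sigma>R = s0 \<cdot> d1R"
    "\<sigma>S \<in> hom C S P" "pr1 \<cdot> \<sigma>S = r0 \<cdot> d0S" "pr2 \<cdot> \<sigma>S = ident C S"
    "(pr1, \<sigma>R) \<in> \<Sigma>" "jointly_extremally_epic C \<sigma>R \<sigma>S"
    using pullback_split_sections[OF S_in_\<Sigma> split hom pullback_P] by blast
  moreover have "p \<cdot> \<sigma>R = d0R" "p \<cdot> \<sigma>S = d1S"
    using connector \<sigma>(1-6) unfolding is_connector_def by blast+
  ultimately show thesis by (intro that)
qed

lemma connector_trivial_S: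
  assumes "v \<in> Arr C" "Cod C v = P" "pr2 \<cdot> v = s0 \<cdot> (d1R \<cdot> (pr1 \<cdot> v))"
  shows "p \<cdot> v = d0R \<cdot> (pr1 \<cdot> v)"
proof -
  obtain \<sigma>R where \<sigma>R: "\<sigma>R \<in> hom C R P" "pr1 \<cdot> \<sigma>R = ident C R" "pr2 \<cdot> \<sigma>R = s0 \<cdot> d1R" "p \<cdot> \<sigma>R = d0R"
    using connector_sections by blast
  note arr = \<sigma>R(1)[unfolded in_hom_iff]
  have "v = \<sigma>R \<cdot> (pr1 \<cdot> v)"
    by (rule P_jointly_monic)
      (use assms arr comp_assoc_subst[OF \<sigma>R(2), of "pr1 \<cdot> v"]
        comp_assoc_subst[OF \<sigma>R(3), of "pr1 \<cdot> v"] in simp_all)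
  then show ?thesis using assms arr comp_assoc_subst[OF \<sigma>R(4), of "pr1 \<cdot> v"] by simp
qed

lemma connector_trivial_R:
  assumes "v \<in> Arr C" "Cod C v = P" "pr1 \<cdot> v = r0 \<cdot> (d0S \<cdot> (pr2 \<cdot> v))"
  shows "p \<cdot> v = d1S \<cdot> (pr2 \<cdot> v)"
proof -
  obtain \<sigma>S where \<sigma>S: "\<sigma>S \<in> hom C S P" "pr1 \<cdot> \<sigma>S = r0 \<cdot> d0S" "pr2 \<cdot> \<sigma>S = ident C S" "p \<cdot> \<sigma>S = d1S"
    using connector_sections by blast
  note arr = \<sigma>S(1)[unfolded in_hom_iff]
  have "v = \<sigma>S \<cdot> (pr2 \<cdot> v)"
    by (rule P_jointly_monic)
      (use assms arr comp_assoc_subst[OF \<sigma>S(2), of "pr2 \<cdot> v"]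
        comp_assoc_subst[OF \<sigma>S(3), of "pr2 \<cdot> v"] in simp_all)
  then show ?thesis using assms arr comp_assoc_subst[OF \<sigma>S(4), of "pr2 \<cdot> v"] by simp
qed

lemma connector_S_coherence:
  obtains \<kappa> where "\<kappa> \<in> hom C P S" "d0S \<cdot> \<kappa> = d0R \<cdot> pr1" "d1S \<cdot> \<kappa> = p"
proof -
  obtain \<sigma>R \<sigma>S where \<sigma>: "\<sigma>R \<in> hom C R P" "pr1 \<cdot> \<sigma>R = ident C R" "pr2 \<cdot> \<sigma>R = s0 \<cdot> d1R" "p \<cdot> \<sigma>R = d0R"
    "\<sigma>S \<in> hom C S P" "pr1 \<cdot> \<sigma>S = r0 \<cdot> d0S" "pr2 \<cdot> \<sigma>S = ident C S" "p \<cdot> \<sigma>S = d1S"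
    and jee: "jointly_extremally_epic C \<sigma>R \<sigma>S"
    using connector_sections by blast
  note arr = \<sigma>(1)[unfolded in_hom_iff] \<sigma>(5)[unfolded in_hom_iff]
  show thesis
  proof (rule jointly_extremally_epic_factor[OF finitely_complete jee _ _ _
        reflexive_relation_jointly_monic[OF S_reflexive]])
    show "d0S \<cdot> (s0 \<cdot> d0R) = (d0R \<cdot> pr1) \<cdot> \<sigma>R" "d1S \<cdot> (s0 \<cdot> d0R) = p \<cdot> \<sigma>R"
      "d0S \<cdot> ident C S = (d0R \<cdot> pr1) \<cdot> \<sigma>S" "d1S \<cdot> ident C S = p \<cdot> \<sigma>S"
      using arr \<sigma> comp_assoc_subst[OF \<sigma>(6)] by simp_all
  qed (use arr that in \<open>simp_all add: in_hom_iff\<close>)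
qed

lemma connector_R_coherence:
  obtains \<kappa> where "\<kappa> \<in> hom C P R" "d0R \<cdot> \<kappa> = p" "d1R \<cdot> \<kappa> = d1S \<cdot> pr2"
proof -
  obtain \<sigma>R \<sigma>S where \<sigma>: "\<sigma>R \<in> hom C R P" "pr1 \<cdot> \<sigma>R = ident C R" "pr2 \<cdot> \<sigma>R = s0 \<cdot> d1R" "p \<cdot> \<sigma>R = d0R"
    "\<sigma>S \<in> hom C S P" "pr1 \<cdot> \<sigma>S = r0 \<cdot> d0S" "pr2 \<cdot> \<sigma>S = ident C S" "p \<cdot> \<sigma>S = d1S"
    and jee: "jointly_extremally_epic C \<sigma>R \<sigma>S"
    using connector_sections by blast
  note arr = \<sigma>(1)[unfolded in_hom_iff] \<sigma>(5)[unfolded in_hom_iff]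
  show thesis
  proof (rule jointly_extremally_epic_factor[OF finitely_complete jee _ _ _
        reflexive_relation_jointly_monic[OF R_relation]])
    show "d0R \<cdot> ident C R = p \<cdot> \<sigma>R" "d1R \<cdot> ident C R = (d1S \<cdot> pr2) \<cdot> \<sigma>R"
      "d0R \<cdot> (r0 \<cdot> d1S) = p \<cdot> \<sigma>S" "d1R \<cdot> (r0 \<cdot> d1S) = (d1S \<cdot> pr2) \<cdot> \<sigma>S"
      using arr \<sigma> comp_assoc_subst[OF \<sigma>(3)] by simp_all
  qed (use arr that in \<open>simp_all add: in_hom_iff\<close>)
qed

lemma conn_app_lift:
  assumes "witnesses C R d0R d1R T x y r" "witnesses C S d0S d1S T y z s"
  obtains u where "u \<in> hom C T P" "pr1 \<cdot> u = r" "pr2 \<cdot> u = s" "conn_app C P pr1 pr2 p T r s = p \<cdot> u"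
proof -
  have "\<exists>u. u \<in> hom C T P \<and> pr1 \<cdot> u = r \<and> pr2 \<cdot> u = s"
    using assms by (intro pullback_lift[OF pullback_P]) (auto simp: witnesses_def in_hom_iff)
  then show thesis using that conn_app_eq[OF pullback_P] by blast
qed

lemma conn_app_coherent:
  assumes r: "witnesses C R d0R d1R T x y r" and s: "witnesses C S d0S d1S T y z s"
  shows "relates C S d0S d1S T x (conn_app C P pr1 pr2 p T r s)"
    and "relates C R d0R d1R T (conn_app C P pr1 pr2 p T r s) z"
proof -
  obtain u where u: "u \<in> hom C T P" "pr1 \<cdot> u = r" "pr2 \<cdot> u = s"
    "conn_app C P pr1 pr2 p T r s = p \<cdot> u"
    using conn_app_lift[OF r s] by blast
  obtain \<kappa>S where \<kappa>S: "\<kappa>S \<in> hom C P S" "d0S \<cdot> \<kappa>S = d0R \<cdot> pr1" "d1S \<cdot> \<kappa>S = p"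
    using connector_S_coherence by blast
  obtain \<kappa>R where \<kappa>R: "\<kappa>R \<in> hom C P R" "d0R \<cdot> \<kappa>R = p" "d1R \<cdot> \<kappa>R = d1S \<cdot> pr2"
    using connector_R_coherence by blast
  note arr = u(1)[unfolded in_hom_iff] \<kappa>S(1)[unfolded in_hom_iff] \<kappa>R(1)[unfolded in_hom_iff]
  have "witnesses C S d0S d1S T x (p \<cdot> u) (\<kappa>S \<cdot> u)"
    using r arr comp_assoc_subst[OF \<kappa>S(2), of u] comp_assoc_subst[OF \<kappa>S(3), of u] u(2)
    by (simp add: witnesses_def in_hom_iff)
  moreover have "witnesses C R d0R d1R T (p \<cdot> u) z (\<kappa>R \<cdot> u)"
    using s arr comp_assoc_subst[OF \<kappa>R(2), of u] comp_assoc_subst[OF \<kappa>R(3), of u] u(3)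
    by (simp add: witnesses_def in_hom_iff)
  ultimately show "relates C S d0S d1S T x (conn_app C P pr1 pr2 p T r s)"
    and "relates C R d0R d1R T (conn_app C P pr1 pr2 p T r s) z"
    unfolding relates_def u(4) by blast+
qed

text \<open>Q is the object of quadruples xRySzSt; \<open>\<rho>\<close> and \<open>\<rho>'\<close> pick out p(xRySz)RzSt and xRySt.\<close>

lemma connector_left_assoc_universal:
  assumes pbS2: "is_pullback C d1S d0S S2 q1 q2"
    and \<tau>: "\<tau> \<in> hom C S2 S" "d0S \<cdot> \<tau> = d0S \<cdot> q1" "d1S \<cdot> \<tau> = d1S \<cdot> q2"
    and pbQ: "is_pullback C pr2 q1 Q f1 f2"
    and \<kappa>: "\<kappa> \<in> hom C P R" "d0R \<cdot> \<kappa> = p" "d1R \<cdot> \<kappa> = d1S \<cdot> pr2"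
    and \<rho>: "\<rho> \<in> hom C Q P" "pr1 \<cdot> \<rho> = \<kappa> \<cdot> f1" "pr2 \<cdot> \<rho> = q2 \<cdot> f2"
    and \<rho>': "\<rho>' \<in> hom C Q P" "pr1 \<cdot> \<rho>' = pr1 \<cdot> f1" "pr2 \<cdot> \<rho>' = \<tau> \<cdot> f2"
  shows "p \<cdot> \<rho> = p \<cdot> \<rho>'"
proof -
  note S2 = pullbackD[OF pbS2] and Q = pullbackD[OF pbQ]
  have split_S: "split_epi C d1S s0" and hom_S: "d0S \<in> hom C S X" "d1S \<in> hom C S X"
    by (simp_all add: split_epi_def in_hom_iff)
  obtain ss where ss: "ss \<in> hom C S S2" "q1 \<cdot> ss = ident C S" "q2 \<cdot> ss = s0 \<cdot> d1S"
    and ss_\<Sigma>: "(q1, ss) \<in> \<Sigma>"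
    using pullback_split_sections[OF S_in_\<Sigma> split_S hom_S pbS2] by blast
  obtain \<sigma>S where \<sigma>S: "\<sigma>S \<in> hom C S P" "pr1 \<cdot> \<sigma>S = r0 \<cdot> d0S" "pr2 \<cdot> \<sigma>S = ident C S" "p \<cdot> \<sigma>S = d1S"
    using connector_sections by blast
  have split_P: "split_epi C pr2 \<sigma>S" and hom_P: "q1 \<in> hom C S2 S" "pr2 \<in> hom C P S"
    using \<sigma>S S2 by (simp_all add: split_epi_def in_hom_iff)
  obtain s4 t4 where s4: "s4 \<in> hom C P Q" "f1 \<cdot> s4 = ident C P" "f2 \<cdot> s4 = ss \<cdot> pr2"
    and t4: "t4 \<in> hom C S2 Q" "f1 \<cdot> t4 = \<sigma>S \<cdot> q1" "f2 \<cdot> t4 = ident C S2"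
    and jee: "jointly_extremally_epic C s4 t4"
    using pullback_split_sections[OF ss_\<Sigma> split_P hom_P pbQ] by blast
  note arr = ss(1)[unfolded in_hom_iff] \<sigma>S(1)[unfolded in_hom_iff] s4(1)[unfolded in_hom_iff]
    t4(1)[unfolded in_hom_iff] \<tau>(1)[unfolded in_hom_iff] \<kappa>(1)[unfolded in_hom_iff]
    \<rho>(1)[unfolded in_hom_iff] \<rho>'(1)[unfolded in_hom_iff] S2(1-10) Q(1-10)
  note eqs_base = ss(2,3) \<sigma>S(2-4) s4(2,3) t4(2,3) \<tau>(2,3) \<kappa>(2,3) \<rho>(2,3) \<rho>'(2,3) S2(11) Q(11)
  note eqs = eqs_base eqs_base[THEN comp_assoc_subst]
  have \<tau>_ss: "\<tau> \<cdot> ss = ident C S" by (rule S_jointly_monic) (use arr eqs in simp_all)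
  have \<kappa>_\<sigma>S: "\<kappa> \<cdot> \<sigma>S = r0 \<cdot> d1S" by (rule R_jointly_monic) (use arr eqs in simp_all)
  have "p \<cdot> (\<rho> \<cdot> s4) = d0R \<cdot> (pr1 \<cdot> (\<rho> \<cdot> s4))" by (rule connector_trivial_S) (use arr eqs in simp_all)
  moreover have "\<rho>' \<cdot> s4 = ident C P"
    by (rule P_jointly_monic) (use arr eqs comp_assoc_subst[OF \<tau>_ss] in simp_all)
  ultimately have on_s4: "(p \<cdot> \<rho>) \<cdot> s4 = (p \<cdot> \<rho>') \<cdot> s4" using arr eqs by simp
  have "p \<cdot> (\<rho> \<cdot> t4) = d1S \<cdot> (pr2 \<cdot> (\<rho> \<cdot> t4))"
    by (rule connector_trivial_R) (use arr eqs comp_assoc_subst[OF \<kappa>_\<sigma>S] in simp_all)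
  moreover have "p \<cdot> (\<rho>' \<cdot> t4) = d1S \<cdot> (pr2 \<cdot> (\<rho>' \<cdot> t4))"
    by (rule connector_trivial_R) (use arr eqs in simp_all)
  ultimately have on_t4: "(p \<cdot> \<rho>) \<cdot> t4 = (p \<cdot> \<rho>') \<cdot> t4" using arr eqs by simp
  show ?thesis
    by (rule jointly_extremally_epic_cancel[OF finitely_complete jee _ _ _ on_s4 on_t4])
      (use arr in \<open>simp_all add: in_hom_iff\<close>)
qed

text \<open>Q is the object of quadruples xRyRzSt; \<open>\<nu>\<close> and \<open>\<nu>'\<close> pick out xRySp(yRzSt) and xRzSt.\<close>

lemma connector_right_assoc_universal:
  assumes pbR2: "is_pullback C d1R d0R R2 m1 m2"
    and \<mu>: "\<mu> \<in> hom C R2 R" "d0R \<cdot> \<mu> = d0R \<cdot> m1" "d1R \<cdot> \<mu> = d1R \<cdot> m2"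
    and pbQ: "is_pullback C m2 pr1 Q f1 f2"
    and \<kappa>: "\<kappa> \<in> hom C P S" "d0S \<cdot> \<kappa> = d0R \<cdot> pr1" "d1S \<cdot> \<kappa> = p"
    and \<nu>: "\<nu> \<in> hom C Q P" "pr1 \<cdot> \<nu> = m1 \<cdot> f1" "pr2 \<cdot> \<nu> = \<kappa> \<cdot> f2"
    and \<nu>': "\<nu>' \<in> hom C Q P" "pr1 \<cdot> \<nu>' = \<mu> \<cdot> f1" "pr2 \<cdot> \<nu>' = pr2 \<cdot> f2"
  shows "p \<cdot> \<nu> = p \<cdot> \<nu>'"
proof -
  note R2 = pullbackD[OF pbR2] and Q = pullbackD[OF pbQ]
  have "\<exists>tR. tR \<in> hom C R R2 \<and> m1 \<cdot> tR = r0 \<cdot> d0R \<and> m2 \<cdot> tR = ident C R"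
    by (rule pullback_lift[OF pbR2]) (simp_all add: in_hom_iff)
  then obtain tR where tR: "tR \<in> hom C R R2" "m1 \<cdot> tR = r0 \<cdot> d0R" "m2 \<cdot> tR = ident C R" by blast
  obtain \<sigma>R where \<sigma>R: "\<sigma>R \<in> hom C R P" "pr1 \<cdot> \<sigma>R = ident C R" "pr2 \<cdot> \<sigma>R = s0 \<cdot> d1R" "p \<cdot> \<sigma>R = d0R"
    and \<sigma>R_\<Sigma>: "(pr1, \<sigma>R) \<in> \<Sigma>"
    using connector_sections by blast
  have split: "split_epi C m2 tR" and hom: "pr1 \<in> hom C P R" "m2 \<in> hom C R2 R"
    using tR R2 by (simp_all add: split_epi_def in_hom_iff)
  obtain sQ tQ where sQ: "sQ \<in> hom C R2 Q" "f1 \<cdot> sQ = ident C R2" "f2 \<cdot> sQ = \<sigma>R \<cdot> m2"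
    and tQ: "tQ \<in> hom C P Q" "f1 \<cdot> tQ = tR \<cdot> pr1" "f2 \<cdot> tQ = ident C P"
    and jee: "jointly_extremally_epic C sQ tQ"
    using pullback_split_sections[OF \<sigma>R_\<Sigma> split hom pbQ] by blast
  note arr = tR(1)[unfolded in_hom_iff] \<sigma>R(1)[unfolded in_hom_iff] sQ(1)[unfolded in_hom_iff]
    tQ(1)[unfolded in_hom_iff] \<mu>(1)[unfolded in_hom_iff] \<kappa>(1)[unfolded in_hom_iff]
    \<nu>(1)[unfolded in_hom_iff] \<nu>'(1)[unfolded in_hom_iff] R2(1-10) Q(1-10)
  note eqs_base = tR(2,3) \<sigma>R(2-4) sQ(2,3) tQ(2,3) \<mu>(2,3) \<kappa>(2,3) \<nu>(2,3) \<nu>'(2,3) R2(11) Q(11)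
  note eqs = eqs_base eqs_base[THEN comp_assoc_subst]
  have \<mu>_tR: "\<mu> \<cdot> tR = ident C R" by (rule R_jointly_monic) (use arr eqs in simp_all)
  have \<kappa>_\<sigma>R: "\<kappa> \<cdot> \<sigma>R = s0 \<cdot> d0R" by (rule S_jointly_monic) (use arr eqs in simp_all)
  have "p \<cdot> (\<nu> \<cdot> sQ) = d0R \<cdot> (pr1 \<cdot> (\<nu> \<cdot> sQ))"
    by (rule connector_trivial_S) (use arr eqs comp_assoc_subst[OF \<kappa>_\<sigma>R] in simp_all)
  moreover have "p \<cdot> (\<nu>' \<cdot> sQ) = d0R \<cdot> (pr1 \<cdot> (\<nu>' \<cdot> sQ))"
    by (rule connector_trivial_S) (use arr eqs in simp_all)
  ultimately have on_sQ: "(p \<cdot> \<nu>) \<cdot> sQ = (p \<cdot> \<nu>') \<cdot> sQ" using arr eqs by simp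
  have "p \<cdot> (\<nu> \<cdot> tQ) = d1S \<cdot> (pr2 \<cdot> (\<nu> \<cdot> tQ))" by (rule connector_trivial_R) (use arr eqs in simp_all)
  moreover have "\<nu>' \<cdot> tQ = ident C P"
    by (rule P_jointly_monic) (use arr eqs comp_assoc_subst[OF \<mu>_tR] in simp_all)
  ultimately have on_tQ: "(p \<cdot> \<nu>) \<cdot> tQ = (p \<cdot> \<nu>') \<cdot> tQ" using arr eqs by simp
  show ?thesis
    by (rule jointly_extremally_epic_cancel[OF finitely_complete jee _ _ _ on_sQ on_tQ])
      (use arr in \<open>simp_all add: in_hom_iff\<close>)
qed

lemma conn_app_left_assoc:
  assumes r: "witnesses C R d0R d1R T x y r" and s1: "witnesses C S d0S d1S T y z s1"
    and s2: "witnesses C S d0S d1S T z t s2"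
  shows "\<exists>r' s'. witnesses C R d0R d1R T (conn_app C P pr1 pr2 p T r s1) z r' \<and>
    witnesses C S d0S d1S T y t s' \<and> conn_app C P pr1 pr2 p T r' s2 = conn_app C P pr1 pr2 p T r s'"
proof -
  obtain S2 q1 q2 where pbS2: "is_pullback C d1S d0S S2 q1 q2"
    by (rule pullback_exists[OF finitely_complete, of d1S d0S]) simp_all
  note S2 = pullbackD[OF pbS2]
  obtain \<tau> where \<tau>: "\<tau> \<in> hom C S2 S" "d0S \<cdot> \<tau> = d0S \<cdot> q1" "d1S \<cdot> \<tau> = d1S \<cdot> q2"
    using sigma_relation_transitive[OF S_relation pbS2] by blast
  obtain \<kappa> where \<kappa>: "\<kappa> \<in> hom C P R" "d0R \<cdot> \<kappa> = p" "d1R \<cdot> \<kappa> = d1S \<cdot> pr2"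
    using connector_R_coherence by blast
  obtain Q f1 f2 where pbQ: "is_pullback C pr2 q1 Q f1 f2"
    by (rule pullback_exists[OF finitely_complete, of pr2 q1]) (use S2 in simp_all)
  note Q = pullbackD[OF pbQ]
  note arr = \<tau>(1)[unfolded in_hom_iff] \<kappa>(1)[unfolded in_hom_iff] S2(1-10) Q(1-10)
  note eqs_base = \<tau>(2,3) \<kappa>(2,3) S2(11) Q(11)
  note eqs = eqs_base eqs_base[THEN comp_assoc_subst]
  have "\<exists>\<rho>. \<rho> \<in> hom C Q P \<and> pr1 \<cdot> \<rho> = \<kappa> \<cdot> f1 \<and> pr2 \<cdot> \<rho> = q2 \<cdot> f2"
    by (rule pullback_lift[OF pullback_P]) (use arr eqs in \<open>simp_all add: in_hom_iff\<close>)
  then obtain \<rho> where \<rho>: "\<rho> \<in> hom C Q P" "pr1 \<cdot> \<rho> = \<kappa> \<cdot> f1" "pr2 \<cdot> \<rho> = q2 \<cdot> f2" by blast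
  have "\<exists>\<rho>'. \<rho>' \<in> hom C Q P \<and> pr1 \<cdot> \<rho>' = pr1 \<cdot> f1 \<and> pr2 \<cdot> \<rho>' = \<tau> \<cdot> f2"
    by (rule pullback_lift[OF pullback_P]) (use arr eqs in \<open>simp_all add: in_hom_iff\<close>)
  then obtain \<rho>' where \<rho>': "\<rho>' \<in> hom C Q P" "pr1 \<cdot> \<rho>' = pr1 \<cdot> f1" "pr2 \<cdot> \<rho>' = \<tau> \<cdot> f2" by blast
  have universal: "p \<cdot> \<rho> = p \<cdot> \<rho>'"
    by (rule connector_left_assoc_universal[OF pbS2 \<tau> pbQ \<kappa> \<rho> \<rho>'])
  obtain u where u: "u \<in> hom C T P" "pr1 \<cdot> u = r" "pr2 \<cdot> u = s1"
    "conn_app C P pr1 pr2 p T r s1 = p \<cdot> u"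
    using conn_app_lift[OF r s1] by blast
  have "\<exists>v. v \<in> hom C T S2 \<and> q1 \<cdot> v = s1 \<and> q2 \<cdot> v = s2"
    by (rule pullback_lift[OF pbS2]) (use s1 s2 in \<open>simp_all add: witnesses_def\<close>)
  then obtain v where v: "v \<in> hom C T S2" "q1 \<cdot> v = s1" "q2 \<cdot> v = s2" by blast
  have "\<exists>m. m \<in> hom C T Q \<and> f1 \<cdot> m = u \<and> f2 \<cdot> m = v"
    by (rule pullback_lift[OF pbQ]) (use u v S2 in simp_all)
  then obtain m where m: "m \<in> hom C T Q" "f1 \<cdot> m = u" "f2 \<cdot> m = v" by blast
  note arr' = u(1)[unfolded in_hom_iff] v(1)[unfolded in_hom_iff] m(1)[unfolded in_hom_iff]
    \<rho>(1)[unfolded in_hom_iff] \<rho>'(1)[unfolded in_hom_iff]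
  note eqs' = u(2,3) v(2,3) m(2,3)
    \<rho>(2,3)[THEN comp_assoc_subst] \<rho>'(2,3)[THEN comp_assoc_subst]
  show ?thesis
  proof (intro exI conjI)
    show "witnesses C R d0R d1R T (conn_app C P pr1 pr2 p T r s1) z (\<kappa> \<cdot> u)"
      using s1 arr arr' eqs eqs' u(4) by (simp add: witnesses_def in_hom_iff)
    show "witnesses C S d0S d1S T y t (\<tau> \<cdot> v)"
      using s1 s2 arr arr' eqs eqs' by (simp add: witnesses_def in_hom_iff)
    have "conn_app C P pr1 pr2 p T (\<kappa> \<cdot> u) s2 = p \<cdot> (\<rho> \<cdot> m)"
      by (rule conn_app_eq[OF pullback_P]) (use arr arr' eqs eqs' in \<open>simp_all add: in_hom_iff\<close>)
    also have "\<dots> = (p \<cdot> \<rho>) \<cdot> m" using arr arr' by simp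
    also have "\<dots> = p \<cdot> (\<rho>' \<cdot> m)" using universal arr arr' by simp
    also have "\<dots> = conn_app C P pr1 pr2 p T r (\<tau> \<cdot> v)"
      by (rule conn_app_eq[OF pullback_P, symmetric])
        (use arr arr' eqs eqs' in \<open>simp_all add: in_hom_iff\<close>)
    finally show "conn_app C P pr1 pr2 p T (\<kappa> \<cdot> u) s2 = conn_app C P pr1 pr2 p T r (\<tau> \<cdot> v)" .
  qed
qed

lemma conn_app_right_assoc:
  assumes pre: "preorder_rel C X R d0R d1R r0"
    and r1: "witnesses C R d0R d1R T x y r1" and r2: "witnesses C R d0R d1R T y z r2"
    and s: "witnesses C S d0S d1S T z t s"
  shows "\<exists>s' r'. witnesses C S d0S d1S T y (conn_app C P pr1 pr2 p T r2 s) s' \<and>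
    witnesses C R d0R d1R T x z r' \<and> conn_app C P pr1 pr2 p T r1 s' = conn_app C P pr1 pr2 p T r' s"
proof -
  obtain R2 m1 m2 where pbR2: "is_pullback C d1R d0R R2 m1 m2"
    by (rule pullback_exists[OF finitely_complete, of d1R d0R]) simp_all
  note R2 = pullbackD[OF pbR2]
  obtain \<mu> where \<mu>: "\<mu> \<in> hom C R2 R" "d0R \<cdot> \<mu> = d0R \<cdot> m1" "d1R \<cdot> \<mu> = d1R \<cdot> m2"
    using preorder_rel_transitive[OF pre pbR2] by blast
  obtain \<kappa> where \<kappa>: "\<kappa> \<in> hom C P S" "d0S \<cdot> \<kappa> = d0R \<cdot> pr1" "d1S \<cdot> \<kappa> = p"
    using connector_S_coherence by blast
  obtain Q f1 f2 where pbQ: "is_pullback C m2 pr1 Q f1 f2"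
    by (rule pullback_exists[OF finitely_complete, of m2 pr1]) (use R2 in simp_all)
  note Q = pullbackD[OF pbQ]
  note arr = \<mu>(1)[unfolded in_hom_iff] \<kappa>(1)[unfolded in_hom_iff] R2(1-10) Q(1-10)
  note eqs_base = \<mu>(2,3) \<kappa>(2,3) R2(11) Q(11)
  note eqs = eqs_base eqs_base[THEN comp_assoc_subst]
  have "\<exists>\<nu>. \<nu> \<in> hom C Q P \<and> pr1 \<cdot> \<nu> = m1 \<cdot> f1 \<and> pr2 \<cdot> \<nu> = \<kappa> \<cdot> f2"
    by (rule pullback_lift[OF pullback_P]) (use arr eqs in \<open>simp_all add: in_hom_iff\<close>)
  then obtain \<nu> where \<nu>: "\<nu> \<in> hom C Q P" "pr1 \<cdot> \<nu> = m1 \<cdot> f1" "pr2 \<cdot> \<nu> = \<kappa> \<cdot> f2" by blast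
  have "\<exists>\<nu>'. \<nu>' \<in> hom C Q P \<and> pr1 \<cdot> \<nu>' = \<mu> \<cdot> f1 \<and> pr2 \<cdot> \<nu>' = pr2 \<cdot> f2"
    by (rule pullback_lift[OF pullback_P]) (use arr eqs in \<open>simp_all add: in_hom_iff\<close>)
  then obtain \<nu>' where \<nu>': "\<nu>' \<in> hom C Q P" "pr1 \<cdot> \<nu>' = \<mu> \<cdot> f1" "pr2 \<cdot> \<nu>' = pr2 \<cdot> f2" by blast
  have universal: "p \<cdot> \<nu> = p \<cdot> \<nu>'"
    by (rule connector_right_assoc_universal[OF pbR2 \<mu> pbQ \<kappa> \<nu> \<nu>'])
  have "\<exists>v. v \<in> hom C T R2 \<and> m1 \<cdot> v = r1 \<and> m2 \<cdot> v = r2"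
    by (rule pullback_lift[OF pbR2]) (use r1 r2 in \<open>simp_all add: witnesses_def\<close>)
  then obtain v where v: "v \<in> hom C T R2" "m1 \<cdot> v = r1" "m2 \<cdot> v = r2" by blast
  obtain u where u: "u \<in> hom C T P" "pr1 \<cdot> u = r2" "pr2 \<cdot> u = s"
    "conn_app C P pr1 pr2 p T r2 s = p \<cdot> u"
    using conn_app_lift[OF r2 s] by blast
  have "\<exists>m. m \<in> hom C T Q \<and> f1 \<cdot> m = v \<and> f2 \<cdot> m = u"
    by (rule pullback_lift[OF pbQ]) (use u v R2 in simp_all)
  then obtain m where m: "m \<in> hom C T Q" "f1 \<cdot> m = v" "f2 \<cdot> m = u" by blast
  note arr' = u(1)[unfolded in_hom_iff] v(1)[unfolded in_hom_iff] m(1)[unfolded in_hom_iff]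
    \<nu>(1)[unfolded in_hom_iff] \<nu>'(1)[unfolded in_hom_iff]
  note eqs' = u(2,3) v(2,3) m(2,3)
    \<nu>(2,3)[THEN comp_assoc_subst] \<nu>'(2,3)[THEN comp_assoc_subst]
  show ?thesis
  proof (intro exI conjI)
    show "witnesses C S d0S d1S T y (conn_app C P pr1 pr2 p T r2 s) (\<kappa> \<cdot> u)"
      using r2 arr arr' eqs eqs' u(4) by (simp add: witnesses_def in_hom_iff)
    show "witnesses C R d0R d1R T x z (\<mu> \<cdot> v)"
      using r1 r2 arr arr' eqs eqs' by (simp add: witnesses_def in_hom_iff)
    have "conn_app C P pr1 pr2 p T r1 (\<kappa> \<cdot> u) = p \<cdot> (\<nu> \<cdot> m)"
      by (rule conn_app_eq[OF pullback_P]) (use arr arr' eqs eqs' in \<open>simp_all add: in_hom_iff\<close>)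
    also have "\<dots> = (p \<cdot> \<nu>) \<cdot> m" using arr arr' by simp
    also have "\<dots> = p \<cdot> (\<nu>' \<cdot> m)" using universal arr arr' by simp
    also have "\<dots> = conn_app C P pr1 pr2 p T (\<mu> \<cdot> v) s"
      by (rule conn_app_eq[OF pullback_P, symmetric])
        (use arr arr' eqs eqs' in \<open>simp_all add: in_hom_iff\<close>)
    finally show "conn_app C P pr1 pr2 p T r1 (\<kappa> \<cdot> u) = conn_app C P pr1 pr2 p T (\<mu> \<cdot> v) s" .
  qed
qed

end

theorem proposition3p7:
  fixes C :: "('o, 'a, 'e) cat_scheme" and \<Sigma> :: "('a \<times> 'a) set"
  assumes cat: "category C"
    and fc: "finitely_complete C"
    and fib: "fibrational C \<Sigma>"
    and malt: "sigma_maltsev C \<Sigma>"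
    and Rrel: "reflexive_relation C X R d0R d1R r0"
    and Srel: "sigma_relation C \<Sigma> X S d0S d1S s0"
    and conn: "is_connector C X R d0R d1R r0 S d0S d1S s0 P pr1 pr2 p"
  shows
    "(\<forall>T\<in>Obj C. \<forall>x\<in>hom C T X. \<forall>y\<in>hom C T X. \<forall>z\<in>hom C T X. \<forall>r s.
        witnesses C R d0R d1R T x y r \<longrightarrow> witnesses C S d0S d1S T y z s \<longrightarrow>
        relates C S d0S d1S T x (conn_app C P pr1 pr2 p T r s) \<and>
        relates C R d0R d1R T (conn_app C P pr1 pr2 p T r s) z)
   \<and> (\<forall>T\<in>Obj C. \<forall>x\<in>hom C T X. \<forall>y\<in>hom C T X. \<forall>z\<in>hom C T X. \<forall>t\<in>hom C T X. \<forall>r s1 s2.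
        witnesses C R d0R d1R T x y r \<longrightarrow> witnesses C S d0S d1S T y z s1 \<longrightarrow>
        witnesses C S d0S d1S T z t s2 \<longrightarrow>
        (\<exists>r' s'. witnesses C R d0R d1R T (conn_app C P pr1 pr2 p T r s1) z r' \<and>
                 witnesses C S d0S d1S T y t s' \<and>
                 conn_app C P pr1 pr2 p T r' s2 = conn_app C P pr1 pr2 p T r s'))
   \<and> (preorder_rel C X R d0R d1R r0 \<longrightarrow>
      (\<forall>T\<in>Obj C. \<forall>x\<in>hom C T X. \<forall>y\<in>hom C T X. \<forall>z\<in>hom C T X. \<forall>t\<in>hom C T X. \<forall>r1 r2 s.
        witnesses C R d0R d1R T x y r1 \<longrightarrow> witnesses C R d0R d1R T y z r2 \<longrightarrow>
        witnesses C S d0S d1S T z t s \<longrightarrow>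
        (\<exists>s' r'. witnesses C S d0S d1S T y (conn_app C P pr1 pr2 p T r2 s) s' \<and>
                 witnesses C R d0R d1R T x z r' \<and>
                 conn_app C P pr1 pr2 p T r1 s' = conn_app C P pr1 pr2 p T r' s)))"
proof -
  interpret connector_context C \<Sigma> X R d0R d1R r0 S d0S d1S s0 P pr1 pr2 p
    by unfold_locales (fact assms)+
  show ?thesis
    by (intro conjI impI ballI allI;
        rule conn_app_coherent conn_app_left_assoc conn_app_right_assoc; assumption)
qed

end
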